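(* Let $r\in\mathbb{F}_2((x^{-1}))$ with $\deg(r)\ge0$. If $[r](0)=1$ or $[r](1)=1$, then $[S(r)](0)=1$.
   Context: $\mathbb{F}_2((x^{-1}))$ is the field of formal series $\sum_{z\in\mathbb{Z}}a_zx^z$, $a_z\in\mathbb{F}_2$, with $a_z\ne0$ for only finitely many positive $z$; $\deg$ is the largest exponent with nonzero coefficient. The polynomial part is $[\sum a_zx^z]=\sum_{z\ge0}a_zx^z$. $S(r)=\frac{r}{x+1}$ if $[r](1)=0$ and $S(r)=\frac{xr}{x+1}$ if $[r](1)=1$. *)

theory Defs
  imports "HOL-Library.Z2" "HOL-Computational_Algebra.Formal_Laurent_Series"
begin

(* F_2((x^{-1})) is represented as the library field of formal Laurent series
   bit fls in the variable y = x^{-1}: the coefficient of x^z is the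
   coefficient of y^(-z). *)
type_synonym F2Lx = "bit fls"

definition coefx :: "F2Lx \<Rightarrow> int \<Rightarrow> bit" where
  "coefx r z = fls_nth r (- z)"

definition xvar :: F2Lx where
  "xvar = fls_X_inv"

(* degree in x: largest exponent of x with nonzero coefficient (meaningful for r \<noteq> 0) *)
definition degx :: "F2Lx \<Rightarrow> int" where
  "degx r = - fls_subdegree r"

(* evaluation of the polynomial part [r] at a point a of F_2 *)
definition polypart_eval :: "F2Lx \<Rightarrow> bit \<Rightarrow> bit" where
  "polypart_eval r a = (\<Sum>z\<in>{0..degx r}. coefx r z * a ^ nat z)"

definition S :: "F2Lx \<Rightarrow> F2Lx" where
  "S r = (if polypart_eval r 1 = 0 then r / (xvar + 1) else (xvar * r) / (xvar + 1))"

end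

theory Submission
  imports Defs
begin

(* Over F_2 the relation s (x + 1) = t says that consecutive coefficients of s add up to
   a coefficient of t, so the constant coefficient of s telescopes into the sum of the
   coefficients of t at x, x^2, ..., i.e. [t / (x + 1)](0) = [t](0) + [t](1).
   For t = r this is [r](0) when [r](1) = 0; for t = x r the same sum is [r](1). *)

declare add_bit_eq_xor [simp del]

lemma bit_add_cancel_left: "(a::bit) + (a + b) = b"
  by (cases a; cases b) simp_all

lemma polypart_eval_at_0: "polypart_eval t 0 = fls_nth t 0"
proof (cases "degx t \<ge> 0")
  case True
  have "polypart_eval t 0 = (\<Sum>z\<in>{0..degx t}. if z = 0 then coefx t z else 0)"
    unfolding polypart_eval_def by (intro sum.cong) (auto simp: nat_eq_iff)
  also have "\<dots> = coefx t 0" using True by simp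
  finally show ?thesis by (simp add: coefx_def)
next
  case False
  then have "fls_nth t 0 = 0"
    using fls_subdegree_leI[of t 0] by (auto simp: degx_def)
  with False show ?thesis by (simp add: polypart_eval_def)
qed

lemma polypart_eval_at_1_eq_sum:
  assumes "degx t \<le> int N"
  shows "polypart_eval t 1 = (\<Sum>i\<le>N. fls_nth t (- int i))"
proof -
  have "polypart_eval t 1 = (\<Sum>z\<in>{0..int N}. fls_nth t (- z))"
    unfolding polypart_eval_def coefx_def power_one mult_1_right
    using assms by (intro sum.mono_neutral_left) (auto simp: degx_def)
  also have "\<dots> = (\<Sum>z\<in>int ` {..N}. fls_nth t (- z))"
    by (simp add: atMost_atLeast0 image_int_atLeastAtMost)
  also have "\<dots> = (\<Sum>i\<le>N. fls_nth t (- int i))"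
    by (simp add: sum.reindex)
  finally show ?thesis .
qed

lemma xvar_plus_1_nonzero: "xvar + 1 \<noteq> (0::F2Lx)"
proof
  assume "xvar + 1 = (0::F2Lx)"
  then have "fls_nth (xvar + 1) (-1) = 0" by simp
  then show False by (simp add: xvar_def)
qed

lemma fls_nth_xvar_times: "fls_nth (xvar * r) n = fls_nth r (n + 1)"
  by (simp add: xvar_def fls_X_inv_times_conv_shift)

lemma fls_nth_times_xvar_plus_1:
  "fls_nth (s * (xvar + 1)) n = fls_nth s (n + 1) + fls_nth s n"
  by (simp add: distrib_left mult.commute[of s] fls_nth_xvar_times)

lemma fls_nth_0_telescope:
  "fls_nth s 0 = fls_nth s (- int k) + (\<Sum>i<k. fls_nth (s * (xvar + 1)) (- int (Suc i)))"
proof (induction k)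
  case (Suc k)
  have "fls_nth s (- int k) = fls_nth s (- int (Suc k)) + fls_nth (s * (xvar + 1)) (- int (Suc k))"
    using bit_add_cancel_left[of "fls_nth s (- int (Suc k))" "fls_nth s (- int k)"]
    by (simp add: fls_nth_times_xvar_plus_1 add.commute)
  with Suc.IH show ?case by (simp add: add.assoc)
qed simp

lemma polypart_eval_div_xvar_plus_1_at_0:
  "polypart_eval (t / (xvar + 1)) 0 = polypart_eval t 0 + polypart_eval t 1"
proof -
  define s where "s = t / (xvar + 1)"
  have t: "t = s * (xvar + 1)"
    using xvar_plus_1_nonzero by (simp add: s_def)
  define N where "N = Suc (nat (max (degx t) (- fls_subdegree s)))"
  have "degx t \<le> int N" "- int N < fls_subdegree s"
    by (auto simp: N_def)
  have "polypart_eval t 1 = (\<Sum>i<Suc N. fls_nth t (- int i))"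
    using \<open>degx t \<le> int N\<close> by (simp add: polypart_eval_at_1_eq_sum lessThan_Suc_atMost)
  also have "\<dots> = fls_nth t 0 + (\<Sum>i<N. fls_nth t (- int (Suc i)))"
    by (simp only: sum.lessThan_Suc_shift of_nat_0 minus_zero)
  also have "(\<Sum>i<N. fls_nth t (- int (Suc i))) = fls_nth s 0"
    using fls_nth_0_telescope[of s N] \<open>- int N < fls_subdegree s\<close> by (simp add: t)
  finally show ?thesis
    by (simp add: s_def polypart_eval_at_0 bit_add_cancel_left)
qed

lemma polypart_eval_xvar_times_at_1:
  "polypart_eval (xvar * r) 1 = polypart_eval (xvar * r) 0 + polypart_eval r 1"
proof -
  define N where "N = nat (degx r)"
  have "degx (xvar * r) \<le> int (Suc N)"
    using N_def by (cases "r = 0") (auto simp: degx_def xvar_def fls_subdegree_mult_fls_X_inv)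
  then have "polypart_eval (xvar * r) 1 = (\<Sum>i\<le>Suc N. fls_nth (xvar * r) (- int i))"
    by (rule polypart_eval_at_1_eq_sum)
  also have "\<dots> = fls_nth (xvar * r) 0 + (\<Sum>i\<le>N. fls_nth r (- int i))"
    by (subst sum.atMost_Suc_shift) (simp add: fls_nth_xvar_times)
  also have "(\<Sum>i\<le>N. fls_nth r (- int i)) = polypart_eval r 1"
    by (rule polypart_eval_at_1_eq_sum[symmetric]) (simp add: N_def)
  finally show ?thesis
    by (simp add: polypart_eval_at_0)
qed

theorem lemma3p2:
  fixes r :: F2Lx
  assumes "r \<noteq> 0" and "degx r \<ge> 0"
    and "polypart_eval r 0 = 1 \<or> polypart_eval r 1 = 1"
  shows "polypart_eval (S r) 0 = 1"
proof (cases "polypart_eval r 1 = 0")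
  case True
  then show ?thesis
    using assms(3) by (simp add: S_def polypart_eval_div_xvar_plus_1_at_0)
next
  case False
  then have "polypart_eval r 1 = 1" by simp
  then show ?thesis
    by (simp add: S_def polypart_eval_div_xvar_plus_1_at_0 polypart_eval_xvar_times_at_1
        bit_add_cancel_left)
qed

end
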